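(* Under the standing assumptions in the context, let $k\ge2$ be a fixed integer and let $v_1,\dots,v_k$ be distinct vertices of $S_{\mathrm{small}}$. Then $$\Pr\bigl(v_1v_2\in E(G)\ \big|\ d_S(v_1)=i_1,\dots,d_S(v_k)=i_k\bigr)=O\!\left(\frac{J^2M}{d(S)^2}\right)$$ for all integers $i_j\le d(v_j)$ ($j\le k$) for which the conditioning event has positive probability, and $\Pr(v_1v_2\in E(G))=O\!\left(\frac{J^2M}{d(S)^2}\right)$.
   Context: All asymptotics are as $n\to\infty$. For each $n$, $\mathbf d=(d(1),\dots,d(n))$ is a sequence of integers with $1\le d(1)\le\dots\le d(n)$ and even sum; $M=\sum_i d(i)$, $\Delta=d(n)$, $d(A)=\sum_{i\in A}d(i)$. $G$ is a uniformly random simple graph on $[n]$ with degree sequence $\mathbf d$. $S\subseteq[n]$ is a given set, $\gamma=d(S)/M$, $d_S(v)$ is the degree of $v$ in $G[S]$. Standing assumptions: there is $\delta=\delta(n)\to0$ with $\delta^{-1}=O(\log\log M)$ and $\Delta^2(\gamma^{-1}\log M)^{12}\le\delta\,d(S)$, and a constant $c>0$ with $\gamma<1-c$. Define $C=\delta^{-1/16}\gamma^{-1}\log M$, $J=\min\{C,\Delta\}$ and $S_{\mathrm{small}}=\{v\in S: d(v)\le C\}$. *)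

theory Defs
  imports Complex_Main "HOL-Library.Landau_Symbols"
begin

text \<open>Vertex set is [n] = {1..n}. A simple graph on [n] is a set of edges, each edge
  a two-element subset of [n].\<close>

definition all_edges :: "nat \<Rightarrow> nat set set" where
  "all_edges n = {e. \<exists>u v. u \<in> {1..n} \<and> v \<in> {1..n} \<and> u \<noteq> v \<and> e = {u, v}}"

definition deg :: "nat set set \<Rightarrow> nat \<Rightarrow> nat" where
  "deg E v = card {e \<in> E. v \<in> e}"

definition degS :: "nat set set \<Rightarrow> nat set \<Rightarrow> nat \<Rightarrow> nat" where
  "degS E S v = card {e \<in> E. v \<in> e \<and> e \<subseteq> S}"

definition graphs_deg :: "nat \<Rightarrow> (nat \<Rightarrow> nat) \<Rightarrow> nat set set set" where
  "graphs_deg n d = {E. E \<subseteq> all_edges n \<and> (\<forall>v\<in>{1..n}. deg E v = d v)}"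

definition uprob :: "'a set \<Rightarrow> ('a \<Rightarrow> bool) \<Rightarrow> real" where
  "uprob Gs P = real (card {G \<in> Gs. P G}) / real (card Gs)"

definition ucondprob :: "'a set \<Rightarrow> ('a \<Rightarrow> bool) \<Rightarrow> ('a \<Rightarrow> bool) \<Rightarrow> real" where
  "ucondprob Gs A B = real (card {G \<in> Gs. A G \<and> B G}) / real (card {G \<in> Gs. B G})"

definition Msum :: "(nat \<Rightarrow> nat) \<Rightarrow> nat \<Rightarrow> nat" where
  "Msum d n = (\<Sum>i=1..n. d i)"

definition dset :: "(nat \<Rightarrow> nat) \<Rightarrow> nat set \<Rightarrow> nat" where
  "dset d A = (\<Sum>i\<in>A. d i)"

definition gam :: "(nat \<Rightarrow> nat) \<Rightarrow> nat \<Rightarrow> nat set \<Rightarrow> real" where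
  "gam d n S = real (dset d S) / real (Msum d n)"

definition Cpar :: "(nat \<Rightarrow> nat) \<Rightarrow> nat \<Rightarrow> nat set \<Rightarrow> real \<Rightarrow> real" where
  "Cpar d n S \<delta> = \<delta> powr (-1/16) / gam d n S * ln (real (Msum d n))"

definition Jpar :: "(nat \<Rightarrow> nat) \<Rightarrow> nat \<Rightarrow> nat set \<Rightarrow> real \<Rightarrow> real" where
  "Jpar d n S \<delta> = min (Cpar d n S \<delta>) (real (d n))"

definition Ssmall :: "(nat \<Rightarrow> nat) \<Rightarrow> nat \<Rightarrow> nat set \<Rightarrow> real \<Rightarrow> nat set" where
  "Ssmall d n S \<delta> = {v \<in> S. real (d v) \<le> Cpar d n S \<delta>}"

end

theory Submission
  imports Defs
begin

text \<open>A switching argument. For a graph G in a conditioning class that contains the edge ab,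
  a forward switching picks arcs (x1, y1), (x2, y2) starting in S and avoiding the conditioned
  vertices V, and replaces the edges ab, x1y1, x2y2 by ax1, bx2, y1y2. This preserves all degrees
  and the degrees d_S(v) for v in V, so it stays inside the class. Among the d(S) arcs starting in S
  at most 2(k + 2 + \<Delta>)\<Delta> are excluded, so once \<Delta>^2 = o(d(S)) every such G has at least
  (d(S)/2)^2 forward switchings. Conversely the switching is recovered from the resulting graph H
  by x1 in N(a), x2 in N(b) and an arc (y1, y2) of H, so each H arises at most d(a) d(b) M times.
  Double counting gives Pr(ab in G) <= 4 d(a) d(b) M / d(S)^2 <= 4 J^2 M / d(S)^2.
  The main condition is only used through \<Delta>^2 <= \<delta> d(S).\<close>

lemma card_filter_exchange:
  assumes "finite G" "R \<subseteq> G" "finite N" "N \<inter> G = {}"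
    and "card {e \<in> R. P e} = card {e \<in> N. P e}"
  shows "card {e \<in> G - R \<union> N. P e} = card {e \<in> G. P e}"
proof -
  have "finite R" using assms(1,2) finite_subset by blast
  have "{e \<in> G - R \<union> N. P e} = {e \<in> G - R. P e} \<union> {e \<in> N. P e}"
    and "{e \<in> G. P e} = {e \<in> G - R. P e} \<union> {e \<in> R. P e}" using assms(2) by auto
  moreover have "card ({e \<in> G - R. P e} \<union> {e \<in> N. P e}) = card {e \<in> G - R. P e} + card {e \<in> N. P e}"
    by (rule card_Un_disjoint) (use assms in auto)
  moreover have "card ({e \<in> G - R. P e} \<union> {e \<in> R. P e}) = card {e \<in> G - R. P e} + card {e \<in> R. P e}"
    by (rule card_Un_disjoint) (use assms \<open>finite R\<close> in auto)
  ultimately show ?thesis using assms(5) by simp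
qed

lemma card_filter_three:
  assumes "distinct [A, B, C]"
  shows "card {e \<in> {A, B, C}. P e} = of_bool (P A) + of_bool (P B) + of_bool (P C)"
proof -
  have "card {e \<in> {A, B, C}. P e} = (\<Sum>e \<in> {A, B, C}. of_bool (P e))"
    using sum.inter_filter[of "{A, B, C}" "\<lambda>_. 1::nat" P] by (simp add: of_bool_def)
  then show ?thesis using assms by simp
qed

lemma card_mult_le_by_double_counting:
  fixes fwd bwd :: "'a \<Rightarrow> 'b set" and sw :: "'a \<Rightarrow> 'b \<Rightarrow> 'a"
  assumes "finite A" "finite B"
    and "\<And>G. G \<in> A \<Longrightarrow> finite (fwd G)" and "\<And>H. H \<in> B \<Longrightarrow> finite (bwd H)"
    and maps_to: "\<And>G t. G \<in> A \<Longrightarrow> t \<in> fwd G \<Longrightarrow> sw G t \<in> B \<and> t \<in> bwd (sw G t)"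
    and inj: "\<And>G G' t. G \<in> A \<Longrightarrow> G' \<in> A \<Longrightarrow> t \<in> fwd G \<Longrightarrow> t \<in> fwd G' \<Longrightarrow> sw G t = sw G' t \<Longrightarrow> G = G'"
    and fwd_ge: "\<And>G. G \<in> A \<Longrightarrow> F \<le> real (card (fwd G))"
    and bwd_le: "\<And>H. H \<in> B \<Longrightarrow> real (card (bwd H)) \<le> R"
  shows "real (card A) * F \<le> real (card B) * R"
proof -
  let ?P = "Sigma A fwd" and ?Q = "Sigma B bwd"
  have "inj_on (\<lambda>(G, t). (sw G t, t)) ?P" using inj by (auto intro: inj_onI)
  moreover have "(\<lambda>(G, t). (sw G t, t)) ` ?P \<subseteq> ?Q" using maps_to by auto
  ultimately have "card ?P \<le> card ?Q" using assms(2,4) by (intro card_inj_on_le) auto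
  moreover have "real (card A) * F \<le> real (card ?P)"
    using sum_mono[of A "\<lambda>_. F" "\<lambda>G. real (card (fwd G))"] fwd_ge assms(1,3)
    by (simp add: card_SigmaI)
  moreover have "real (card ?Q) \<le> real (card B) * R"
    using sum_mono[of B "\<lambda>H. real (card (bwd H))" "\<lambda>_. R"] bwd_le assms(2,4)
    by (simp add: card_SigmaI mult.commute)
  ultimately show ?thesis by linarith
qed

definition nbr :: "nat set set \<Rightarrow> nat \<Rightarrow> nat set" where
  "nbr G v = {u. {v, u} \<in> G}"

definition arcs :: "nat set set \<Rightarrow> nat set \<Rightarrow> (nat \<times> nat) set" where
  "arcs G X = {(x, y). x \<in> X \<and> {x, y} \<in> G}"

lemma all_edgesD: "{x, y} \<in> all_edges n \<Longrightarrow> x \<noteq> y \<and> x \<in> {1..n} \<and> y \<in> {1..n}"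
  unfolding all_edges_def by (auto simp: doubleton_eq_iff)

lemma finite_all_edges: "finite (all_edges n)"
proof -
  have "all_edges n \<subseteq> Pow {1..n}" unfolding all_edges_def by auto
  then show ?thesis by (rule finite_subset) simp
qed

lemma finite_graphs_deg: "finite (graphs_deg n d)"
proof -
  have "graphs_deg n d \<subseteq> Pow (all_edges n)" unfolding graphs_deg_def by auto
  then show ?thesis by (rule finite_subset) (simp add: finite_all_edges)
qed

lemma graphs_degD:
  assumes "G \<in> graphs_deg n d"
  shows "G \<subseteq> all_edges n" and "x \<in> {1..n} \<Longrightarrow> deg G x = d x"
  using assms unfolding graphs_deg_def by auto

lemma nbr_subset:
  assumes "G \<subseteq> all_edges n"
  shows "nbr G v \<subseteq> {1..n}"
proof
  fix u assume "u \<in> nbr G v"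
  then have "{v, u} \<in> all_edges n" using assms unfolding nbr_def by auto
  then show "u \<in> {1..n}" using all_edgesD by blast
qed

lemma finite_nbr: "G \<subseteq> all_edges n \<Longrightarrow> finite (nbr G v)"
  using nbr_subset by (meson finite_atLeastAtMost finite_subset)

lemma card_nbr:
  assumes "G \<subseteq> all_edges n"
  shows "card (nbr G v) = deg G v"
proof -
  have "bij_betw (\<lambda>u. {v, u}) (nbr G v) {e \<in> G. v \<in> e}"
  proof (rule bij_betwI')
    fix e assume e: "e \<in> {e \<in> G. v \<in> e}"
    then obtain p q where "e = {p, q}" using assms unfolding all_edges_def by blast
    then show "\<exists>u \<in> nbr G v. e = {v, u}" using e unfolding nbr_def by (auto simp: insert_commute)
  qed (auto simp: nbr_def doubleton_eq_iff)
  then show ?thesis unfolding deg_def by (rule bij_betw_same_card)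
qed

lemma deg_le_if_graphs_deg:
  assumes "G \<in> graphs_deg n d" and "\<And>x. x \<in> {1..n} \<Longrightarrow> d x \<le> \<Delta>"
  shows "deg G x \<le> \<Delta>"
proof (cases "x \<in> {1..n}")
  case True
  then show ?thesis using assms graphs_degD by simp
next
  case False
  then have "{e \<in> G. x \<in> e} = {}" using graphs_degD(1)[OF assms(1)] unfolding all_edges_def by auto
  then show ?thesis unfolding deg_def by (metis card.empty zero_le)
qed

lemma arcs_eq_Sigma: "arcs G X = Sigma X (nbr G)"
  unfolding arcs_def nbr_def by auto

lemma finite_arcs: "G \<subseteq> all_edges n \<Longrightarrow> finite X \<Longrightarrow> finite (arcs G X)"
  unfolding arcs_eq_Sigma by (simp add: finite_nbr)

lemma card_arcs: "G \<subseteq> all_edges n \<Longrightarrow> finite X \<Longrightarrow> card (arcs G X) = (\<Sum>x\<in>X. deg G x)"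
  unfolding arcs_eq_Sigma by (simp add: card_SigmaI finite_nbr card_nbr)

lemma arcs_empty [simp]: "arcs G {} = {}"
  unfolding arcs_def by simp

lemma card_arcs_graphs_deg:
  assumes "G \<in> graphs_deg n d" and "X \<subseteq> {1..n}"
  shows "card (arcs G X) = dset d X"
proof -
  have "finite X" using assms(2) finite_subset by auto
  then have "card (arcs G X) = (\<Sum>x\<in>X. deg G x)"
    using graphs_degD(1)[OF assms(1)] by (simp add: card_arcs)
  also have "\<dots> = dset d X"
    unfolding dset_def using assms graphs_degD(2) by (intro sum.cong) auto
  finally show ?thesis .
qed

lemma card_arcs_le:
  assumes "G \<in> graphs_deg n d" and "\<And>x. x \<in> {1..n} \<Longrightarrow> d x \<le> \<Delta>" and "finite X"
  shows "card (arcs G X) \<le> card X * \<Delta>"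
proof -
  have "card (arcs G X) = (\<Sum>x\<in>X. deg G x)"
    using graphs_degD(1)[OF assms(1)] assms(3) by (simp add: card_arcs)
  also have "\<dots> \<le> card X * \<Delta>"
    using sum_bounded_above[of X "deg G" \<Delta>] deg_le_if_graphs_deg[OF assms(1,2)] by simp
  finally show ?thesis .
qed

definition switch :: "nat set set \<Rightarrow> nat \<Rightarrow> nat \<Rightarrow> (nat \<times> nat) \<times> (nat \<times> nat) \<Rightarrow> nat set set" where
  "switch G a b t = (case t of ((x1, y1), (x2, y2)) \<Rightarrow>
     G - {{a, b}, {x1, y1}, {x2, y2}} \<union> {{a, x1}, {b, x2}, {y1, y2}})"

definition switch_first :: "nat set set \<Rightarrow> nat set \<Rightarrow> nat set \<Rightarrow> nat \<Rightarrow> (nat \<times> nat) set" where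
  "switch_first G S V a = {(x, y) \<in> arcs G S. x \<notin> V \<and> y \<notin> V \<and> {a, x} \<notin> G}"

definition switch_second ::
    "nat set set \<Rightarrow> nat set \<Rightarrow> nat set \<Rightarrow> nat \<Rightarrow> nat \<times> nat \<Rightarrow> (nat \<times> nat) set" where
  "switch_second G S V b p = {(x, y) \<in> arcs G S.
     x \<notin> V \<union> {fst p, snd p} \<and> y \<notin> V \<union> {fst p, snd p} \<and> {b, x} \<notin> G \<and> {snd p, y} \<notin> G}"

definition fwd_switchings ::
    "nat set set \<Rightarrow> nat set \<Rightarrow> nat set \<Rightarrow> nat \<Rightarrow> nat \<Rightarrow> ((nat \<times> nat) \<times> (nat \<times> nat)) set" where
  "fwd_switchings G S V a b = Sigma (switch_first G S V a) (switch_second G S V b)"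

definition bwd_switchings :: "nat set set \<Rightarrow> nat \<Rightarrow> nat \<Rightarrow> nat \<Rightarrow> ((nat \<times> nat) \<times> (nat \<times> nat)) set" where
  "bwd_switchings H a b n =
     (\<lambda>(x1, x2, y1, y2). ((x1, y1), (x2, y2))) ` (nbr H a \<times> nbr H b \<times> arcs H {1..n})"

context
  fixes G :: "nat set set" and n a b :: nat and S V :: "nat set" and x1 y1 x2 y2 :: nat
  assumes G: "G \<subseteq> all_edges n" and ab: "{a, b} \<in> G"
    and aV: "a \<in> V" and bV: "b \<in> V" and aS: "a \<in> S" and bS: "b \<in> S"
    and fwd: "((x1, y1), (x2, y2)) \<in> fwd_switchings G S V a b"
begin

lemma fwd_switching_edges:
  shows "{x1, y1} \<in> G" "{x2, y2} \<in> G" "{a, x1} \<notin> G" "{b, x2} \<notin> G" "{y1, y2} \<notin> G"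
    and "x1 \<in> S" "x2 \<in> S"
  using fwd unfolding fwd_switchings_def switch_first_def switch_second_def arcs_def by auto

lemma fwd_switching_outside:
  shows "x1 \<notin> V" "y1 \<notin> V" "x2 \<notin> V" "y2 \<notin> V"
  using fwd unfolding fwd_switchings_def switch_first_def switch_second_def by auto

lemma fwd_switching_distinct: "distinct [a, b, x1, y1, x2, y2]"
proof -
  have "x2 \<notin> {x1, y1}" "y2 \<notin> {x1, y1}"
    using fwd unfolding fwd_switchings_def switch_second_def by auto
  moreover have "a \<noteq> b" "x1 \<noteq> y1" "x2 \<noteq> y2"
    using all_edgesD G ab fwd_switching_edges(1,2) by blast+
  ultimately show ?thesis using fwd_switching_outside aV bV by auto
qed

lemma switch_subset_all_edges: "switch G a b ((x1, y1), (x2, y2)) \<subseteq> all_edges n"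
proof -
  have "{a, b, x1, y1, x2, y2} \<subseteq> {1..n}"
    using all_edgesD G ab fwd_switching_edges(1,2) by blast
  then have "{{a, x1}, {b, x2}, {y1, y2}} \<subseteq> all_edges n"
    using fwd_switching_distinct unfolding all_edges_def by auto
  then show ?thesis using G unfolding switch_def by auto
qed

lemma card_filter_switch:
  assumes "card {e \<in> {{a, b}, {x1, y1}, {x2, y2}}. P e} = card {e \<in> {{a, x1}, {b, x2}, {y1, y2}}. P e}"
  shows "card {e \<in> switch G a b ((x1, y1), (x2, y2)). P e} = card {e \<in> G. P e}"
  unfolding switch_def prod.case using assms ab fwd_switching_edges G
  by (intro card_filter_exchange) (auto intro: finite_subset[OF _ finite_all_edges])

lemma switch_distinct_edges:
  shows "distinct [{a, b}, {x1, y1}, {x2, y2}]" "distinct [{a, x1}, {b, x2}, {y1, y2}]"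
  using fwd_switching_distinct by (auto simp: doubleton_eq_iff)

lemma deg_switch: "deg (switch G a b ((x1, y1), (x2, y2))) v = deg G v"
  unfolding deg_def using fwd_switching_distinct
  by (intro card_filter_switch, unfold card_filter_three[OF switch_distinct_edges(1)]
      card_filter_three[OF switch_distinct_edges(2)]) auto

lemma degS_switch:
  assumes "v \<in> V"
  shows "degS (switch G a b ((x1, y1), (x2, y2))) S v = degS G S v"
  unfolding degS_def using fwd_switching_distinct fwd_switching_outside fwd_switching_edges(6,7)
    aS bS assms
  by (intro card_filter_switch, unfold card_filter_three[OF switch_distinct_edges(1)]
      card_filter_three[OF switch_distinct_edges(2)]) auto

lemma switch_in_bwd_switchings:
  "((x1, y1), (x2, y2)) \<in> bwd_switchings (switch G a b ((x1, y1), (x2, y2))) a b n"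
proof -
  let ?H = "switch G a b ((x1, y1), (x2, y2))"
  have "y1 \<in> {1..n}" using all_edgesD G fwd_switching_edges(1) by blast
  then have "(x1, x2, y1, y2) \<in> nbr ?H a \<times> nbr ?H b \<times> arcs ?H {1..n}"
    unfolding switch_def nbr_def arcs_def by auto
  then show ?thesis unfolding bwd_switchings_def by force
qed

lemma switch_inverse:
  "G = switch G a b ((x1, y1), (x2, y2)) - {{a, x1}, {b, x2}, {y1, y2}} \<union> {{a, b}, {x1, y1}, {x2, y2}}"
  unfolding switch_def using ab fwd_switching_edges by auto

end

lemma switch_in_graphs_deg:
  assumes G: "G \<in> graphs_deg n d" and "{a, b} \<in> G" "a \<in> V" "b \<in> V" "a \<in> S" "b \<in> S"
    and t: "t \<in> fwd_switchings G S V a b"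
  shows "switch G a b t \<in> graphs_deg n d"
proof -
  obtain x1 y1 x2 y2 where "t = ((x1, y1), (x2, y2))" by (metis prod.collapse)
  then show ?thesis
    using G assms switch_subset_all_edges deg_switch graphs_degD(1)[OF G] unfolding graphs_deg_def
    by auto
qed

lemma finite_fwd_switchings:
  assumes "G \<subseteq> all_edges n" and "S \<subseteq> {1..n}"
  shows "finite (fwd_switchings G S V a b)"
proof -
  have "finite (arcs G S)" using assms finite_arcs finite_subset by (metis finite_atLeastAtMost)
  moreover have "fwd_switchings G S V a b \<subseteq> arcs G S \<times> arcs G S"
    unfolding fwd_switchings_def switch_first_def switch_second_def by auto
  ultimately show ?thesis using finite_subset by blast
qed

lemma finite_bwd_switchings: "H \<subseteq> all_edges n \<Longrightarrow> finite (bwd_switchings H a b n)"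
  unfolding bwd_switchings_def by (simp add: finite_nbr finite_arcs)

lemma card_bwd_switchings_le:
  assumes "H \<in> graphs_deg n d" and "a \<in> {1..n}" and "b \<in> {1..n}"
  shows "card (bwd_switchings H a b n) \<le> d a * d b * Msum d n"
proof -
  have H: "H \<subseteq> all_edges n" using graphs_degD(1)[OF assms(1)] .
  have "card (bwd_switchings H a b n) \<le> card (nbr H a \<times> nbr H b \<times> arcs H {1..n})"
    unfolding bwd_switchings_def by (rule card_image_le) (simp add: finite_nbr[OF H] finite_arcs[OF H])
  also have "\<dots> = d a * d b * Msum d n"
    using assms graphs_degD(2)[OF assms(1)] card_nbr[OF H] card_arcs_graphs_deg[OF assms(1), of "{1..n}"]
    by (simp add: card_cartesian_product dset_def Msum_def)
  finally show ?thesis .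
qed

lemma card_arcs_avoiding_ge:
  assumes G: "G \<in> graphs_deg n d" and "S \<subseteq> {1..n}" and \<Delta>: "\<And>x. x \<in> {1..n} \<Longrightarrow> d x \<le> \<Delta>"
    and "finite W" "finite Y" "finite Z"
  shows "real (dset d S) - real ((2 * card W + card Y + card Z) * \<Delta>)
    \<le> real (card (arcs G S - (arcs G W \<union> prod.swap ` arcs G W \<union> arcs G Y \<union> prod.swap ` arcs G Z)))"
proof -
  let ?U = "arcs G W \<union> prod.swap ` arcs G W \<union> arcs G Y \<union> prod.swap ` arcs G Z"
  have fin: "finite (arcs G X)" if "finite X" for X
    using finite_arcs[OF graphs_degD(1)[OF G] that] .
  have "card ?U \<le> card (arcs G W) + card (prod.swap ` arcs G W) + card (arcs G Y) + card (prod.swap ` arcs G Z)"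
    by (intro card_Un_le[THEN order_trans] add_mono card_Un_le[THEN order_trans] card_Un_le) auto
  also have "\<dots> = card (arcs G W) + card (arcs G W) + card (arcs G Y) + card (arcs G Z)"
    by (simp add: card_image)
  also have "\<dots> \<le> (2 * card W + card Y + card Z) * \<Delta>"
    using card_arcs_le[OF G \<Delta> assms(4)] card_arcs_le[OF G \<Delta> assms(5)] card_arcs_le[OF G \<Delta> assms(6)]
    unfolding add_mult_distrib mult.assoc by linarith
  finally have "card ?U \<le> (2 * card W + card Y + card Z) * \<Delta>" .
  moreover have "card (arcs G S) - card ?U \<le> card (arcs G S - ?U)"
    by (rule diff_card_le_card_Diff) (use fin assms(4-6) in auto)
  ultimately show ?thesis using card_arcs_graphs_deg[OF G assms(2)] by linarith
qed

lemma switch_first_eq: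
  "switch_first G S V a = arcs G S - (arcs G V \<union> prod.swap ` arcs G V \<union> arcs G (nbr G a))"
  unfolding switch_first_def arcs_def nbr_def by (auto simp: insert_commute)

lemma switch_second_eq:
  "switch_second G S V b p = arcs G S - (arcs G (V \<union> {fst p, snd p}) \<union> prod.swap ` arcs G (V \<union> {fst p, snd p})
     \<union> arcs G (nbr G b) \<union> prod.swap ` arcs G (nbr G (snd p)))"
  unfolding switch_second_def arcs_def nbr_def by (auto simp: insert_commute image_iff)

lemma card_fwd_switchings_ge:
  assumes G: "G \<in> graphs_deg n d" and S: "S \<subseteq> {1..n}" and \<Delta>: "\<And>x. x \<in> {1..n} \<Longrightarrow> d x \<le> \<Delta>"
    and V: "finite V" "card V \<le> k"
    and big: "real (2 * (k + 2 + \<Delta>) * \<Delta>) \<le> real (dset d S)"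
  shows "(real (dset d S) - real (2 * (k + 2 + \<Delta>) * \<Delta>)) ^ 2 \<le> real (card (fwd_switchings G S V a b))"
proof -
  define e where "e = real (dset d S) - real (2 * (k + 2 + \<Delta>) * \<Delta>)"
  have nbr: "finite (nbr G x)" "card (nbr G x) \<le> \<Delta>" for x
    using finite_nbr card_nbr graphs_degD(1)[OF G] deg_le_if_graphs_deg[OF G \<Delta>] by metis+
  have "real ((2 * card V + card (nbr G a)) * \<Delta>) \<le> real (2 * (k + 2 + \<Delta>) * \<Delta>)"
    unfolding of_nat_le_iff using V nbr(2)[of a] by (intro mult_right_mono) auto
  moreover have "real (dset d S) - real ((2 * card V + card (nbr G a)) * \<Delta>) \<le> real (card (switch_first G S V a))"
    using card_arcs_avoiding_ge[OF G S \<Delta> V(1) nbr(1) finite.emptyI] unfolding switch_first_eq by simp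
  ultimately have first: "e \<le> real (card (switch_first G S V a))" unfolding e_def by linarith
  have second: "e \<le> real (card (switch_second G S V b p))" for p
  proof -
    have "card {fst p, snd p} \<le> 2" by (simp add: card_insert_le_m1)
    then have "card (V \<union> {fst p, snd p}) \<le> k + 2"
      using card_Un_le[of V "{fst p, snd p}"] V(2) by linarith
    then have "real ((2 * card (V \<union> {fst p, snd p}) + card (nbr G b) + card (nbr G (snd p))) * \<Delta>)
        \<le> real (2 * (k + 2 + \<Delta>) * \<Delta>)"
      unfolding of_nat_le_iff using nbr(2)[of b] nbr(2)[of "snd p"] by (intro mult_right_mono) auto
    moreover have "real (dset d S)
        - real ((2 * card (V \<union> {fst p, snd p}) + card (nbr G b) + card (nbr G (snd p))) * \<Delta>)
      \<le> real (card (switch_second G S V b p))"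
      unfolding switch_second_eq by (rule card_arcs_avoiding_ge) (use G S \<Delta> V nbr in auto)
    ultimately show ?thesis unfolding e_def by linarith
  qed
  have "finite (arcs G S)"
    using finite_arcs[OF graphs_degD(1)[OF G]] S finite_subset by blast
  then have fin: "finite (switch_first G S V a)" "finite (switch_second G S V b p)" for p
    unfolding switch_first_eq switch_second_eq by auto
  have "e * e \<le> real (card (switch_first G S V a)) * e"
    using first big unfolding e_def by (intro mult_right_mono) auto
  also have "\<dots> \<le> (\<Sum>p \<in> switch_first G S V a. real (card (switch_second G S V b p)))"
    using sum_mono[of "switch_first G S V a" "\<lambda>_. e"] second by simp
  also have "\<dots> = real (card (fwd_switchings G S V a b))"
    unfolding fwd_switchings_def using fin by (simp add: card_SigmaI)
  finally show ?thesis unfolding e_def power2_eq_square .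
qed

lemma uprob_edge_le_by_switching:
  assumes \<Delta>: "\<And>x. x \<in> {1..n} \<Longrightarrow> d x \<le> \<Delta>" and S: "S \<subseteq> {1..n}" and dS: "0 < dset d S"
    and small: "real (2 * (k + 2 + \<Delta>) * \<Delta>) \<le> real (dset d S) / 2"
    and ab: "a \<in> S" "b \<in> S" "a \<in> V" "b \<in> V" and V: "finite V" "card V \<le> k"
    and J: "real (d a) \<le> J" "real (d b) \<le> J"
    and Bs: "Bs \<subseteq> graphs_deg n d"
    and closed: "\<And>G t. G \<in> Bs \<Longrightarrow> {a, b} \<in> G \<Longrightarrow> t \<in> fwd_switchings G S V a b \<Longrightarrow> switch G a b t \<in> Bs"
  shows "uprob Bs (\<lambda>G. {a, b} \<in> G) \<le> 4 * (J ^ 2 * real (Msum d n) / real (dset d S) ^ 2)"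
proof (cases "Bs = {}")
  case True
  then show ?thesis unfolding uprob_def by simp
next
  case False
  let ?A = "{G \<in> Bs. {a, b} \<in> G}"
  have fin: "finite Bs" using Bs finite_graphs_deg finite_subset by blast
  have edges: "G \<subseteq> all_edges n" if "G \<in> Bs" for G using that Bs graphs_degD(1) by blast
  have "real (card ?A) * (real (dset d S) / 2) ^ 2 \<le> real (card Bs) * real (d a * d b * Msum d n)"
  proof (rule card_mult_le_by_double_counting[where sw = "\<lambda>G. switch G a b"])
    fix G t assume G: "G \<in> ?A" and t: "t \<in> fwd_switchings G S V a b"
    obtain x1 y1 x2 y2 where "t = ((x1, y1), (x2, y2))" by (metis prod.collapse)
    then show "switch G a b t \<in> Bs \<and> t \<in> bwd_switchings (switch G a b t) a b n"
      using closed switch_in_bwd_switchings edges G t ab by auto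
  next
    fix G G' t assume "G \<in> ?A" "G' \<in> ?A" "t \<in> fwd_switchings G S V a b" "t \<in> fwd_switchings G' S V a b"
      and "switch G a b t = switch G' a b t"
    moreover obtain x1 y1 x2 y2 where "t = ((x1, y1), (x2, y2))" by (metis prod.collapse)
    ultimately show "G = G'" using switch_inverse edges ab by (metis (no_types, lifting) mem_Collect_eq)
  next
    fix G assume "G \<in> ?A"
    then have "(real (dset d S) - real (2 * (k + 2 + \<Delta>) * \<Delta>)) ^ 2 \<le> real (card (fwd_switchings G S V a b))"
      using Bs small by (intro card_fwd_switchings_ge[OF _ S \<Delta> V]) auto
    moreover have "(real (dset d S) / 2) ^ 2 \<le> (real (dset d S) - real (2 * (k + 2 + \<Delta>) * \<Delta>)) ^ 2"
      using small by (intro power_mono) auto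
    ultimately show "(real (dset d S) / 2) ^ 2 \<le> real (card (fwd_switchings G S V a b))" by linarith
  next
    fix H assume "H \<in> Bs"
    then show "real (card (bwd_switchings H a b n)) \<le> real (d a * d b * Msum d n)"
      using card_bwd_switchings_le Bs ab S by (metis of_nat_le_iff subsetD)
  qed (auto simp: fin intro: finite_fwd_switchings[OF edges S] finite_bwd_switchings[OF edges])
  moreover have "real (d a * d b * Msum d n) \<le> J ^ 2 * real (Msum d n)"
    using J by (simp add: power2_eq_square mult_mono mult_right_mono)
  ultimately have "real (card ?A) * (real (dset d S) / 2) ^ 2 \<le> real (card Bs) * (J ^ 2 * real (Msum d n))"
    by (meson order_trans mult_left_mono of_nat_0_le_iff)
  then show ?thesis
    using False fin dS unfolding uprob_def by (simp add: divide_simps power2_eq_square mult.commute mult.left_commute)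
qed

lemma ucondprob_eq_uprob: "ucondprob Gs A B = uprob {G \<in> Gs. B G} A"
proof -
  have "{G \<in> {G \<in> Gs. B G}. A G} = {G \<in> Gs. A G \<and> B G}" by auto
  then show ?thesis unfolding ucondprob_def uprob_def by simp
qed

lemma uprob_edge_Ssmall_le:
  assumes mono: "\<And>x. x \<in> {1..n} \<Longrightarrow> d x \<le> d n" and S: "S \<subseteq> {1..n}" and dS: "0 < dset d S"
    and small: "real (2 * (k + 2 + d n) * d n) \<le> real (dset d S) / 2" and "2 \<le> k"
    and v: "\<forall>j<k. v j \<in> Ssmall d n S \<delta>"
    and Bs: "Bs \<subseteq> graphs_deg n d"
    and level_set: "\<And>G H. G \<in> Bs \<Longrightarrow> H \<in> graphs_deg n d \<Longrightarrow>
      (\<forall>j<k. degS H S (v j) = degS G S (v j)) \<Longrightarrow> H \<in> Bs"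
  shows "uprob Bs (\<lambda>G. {v 0, v 1} \<in> G) \<le> 4 * (Jpar d n S \<delta> ^ 2 * real (Msum d n) / real (dset d S) ^ 2)"
proof -
  let ?V = "v ` {..<k}"
  have vS: "v j \<in> S" and J: "real (d (v j)) \<le> Jpar d n S \<delta>" if "j < k" for j
    using v that mono S unfolding Ssmall_def Jpar_def by auto
  have "switch G (v 0) (v 1) t \<in> Bs"
    if G: "G \<in> Bs" "{v 0, v 1} \<in> G" and t: "t \<in> fwd_switchings G S ?V (v 0) (v 1)" for G t
  proof (rule level_set[OF G(1)])
    show "switch G (v 0) (v 1) t \<in> graphs_deg n d"
      by (rule switch_in_graphs_deg[OF _ G(2) _ _ _ _ t]) (use G Bs vS \<open>2 \<le> k\<close> in auto)
    have G_edges: "G \<subseteq> all_edges n" using G(1) Bs graphs_degD(1) by blast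
    obtain x1 y1 x2 y2 where t_eq: "t = ((x1, y1), (x2, y2))" by (metis prod.collapse)
    show "\<forall>j<k. degS (switch G (v 0) (v 1) t) S (v j) = degS G S (v j)"
    proof (intro allI impI)
      fix j assume "j < k"
      then show "degS (switch G (v 0) (v 1) t) S (v j) = degS G S (v j)"
        unfolding t_eq using degS_switch[OF G_edges G(2) _ _ _ _ t[unfolded t_eq]] vS \<open>2 \<le> k\<close> by auto
    qed
  qed
  then show ?thesis
    using vS J \<open>2 \<le> k\<close> card_image_le[of "{..<k}" v]
    by (intro uprob_edge_le_by_switching[where V = ?V, OF mono S dS small _ _ _ _ _ _ _ _ Bs]) auto
qed

lemma n_le_Msum:
  assumes "\<And>i. i \<in> {1..n} \<Longrightarrow> 1 \<le> d i"
  shows "n \<le> Msum d n"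
  using sum_mono[of "{1..n}" "\<lambda>_. 1" d] assms unfolding Msum_def by simp

lemma dset_le_Msum: "S \<subseteq> {1..n} \<Longrightarrow> dset d S \<le> Msum d n"
  unfolding dset_def Msum_def by (rule sum_mono2) auto

lemma one_le_ln_divide:
  fixes M x :: real
  assumes "exp 1 \<le> M" and "0 < x" and "x \<le> 1"
  shows "1 \<le> ln M / x"
proof -
  have "1 \<le> ln M" using assms(1) ln_ge_iff[of M 1] by (smt (verit) exp_gt_zero)
  also have "\<dots> \<le> ln M / x" using assms(2,3) \<open>1 \<le> ln M\<close> by (simp add: le_divide_eq)
  finally show ?thesis .
qed

lemma switching_error_small:
  fixes \<Delta> :: nat and \<delta> dS :: real
  assumes "1 \<le> \<Delta>" and "real \<Delta> ^ 2 \<le> \<delta> * dS" and "(4 * real k + 12) * \<delta> < 1" and "0 < dS"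
  shows "real (2 * (k + 2 + \<Delta>) * \<Delta>) \<le> dS / 2"
proof -
  have "real (2 * (k + 2 + \<Delta>) * \<Delta>) = (2 * real k + 4) * real \<Delta> + 2 * real \<Delta> ^ 2"
    by (simp add: algebra_simps power2_eq_square)
  also have "\<dots> \<le> (2 * real k + 4) * real \<Delta> ^ 2 + 2 * real \<Delta> ^ 2"
    using assms(1) by (intro add_right_mono mult_left_mono) (auto simp: power2_eq_square)
  also have "\<dots> = (2 * real k + 6) * real \<Delta> ^ 2"
    by (simp add: algebra_simps)
  also have "\<dots> \<le> (2 * real k + 6) * (\<delta> * dS)"
    using assms(2) by (intro mult_left_mono) auto
  also have "\<dots> = (4 * real k + 12) * \<delta> * dS / 2"
    by (simp add: algebra_simps)
  also have "\<dots> \<le> dS / 2"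
    using mult_strict_right_mono[OF assms(3,4)] by linarith
  finally show ?thesis .
qed

lemma switching_error_small_if_main_cond:
  assumes "3 \<le> n" and pos: "\<And>i. i \<in> {1..n} \<Longrightarrow> 1 \<le> d i" and S: "S \<subseteq> {1..n}" and dS: "0 < dset d S"
    and main: "real (d n) ^ 2 * (ln (real (Msum d n)) / gam d n S) ^ 12 \<le> \<delta> * real (dset d S)"
    and "(4 * real k + 12) * \<delta> < 1"
  shows "real (2 * (k + 2 + d n) * d n) \<le> real (dset d S) / 2"
proof (rule switching_error_small)
  have "exp 1 \<le> real (Msum d n)"
    using n_le_Msum[of n d] pos \<open>3 \<le> n\<close> exp_le by fastforce
  moreover have "0 < gam d n S" and "gam d n S \<le> 1"
    using dS dset_le_Msum[OF S, of d] unfolding gam_def by (auto simp: divide_le_eq_1)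
  ultimately have "1 \<le> (ln (real (Msum d n)) / gam d n S) ^ 12"
    by (intro one_le_power one_le_ln_divide)
  then show "real (d n) ^ 2 \<le> \<delta> * real (dset d S)"
    using main mult_left_mono[of 1 _ "real (d n) ^ 2"] by fastforce
  show "1 \<le> d n" using pos \<open>3 \<le> n\<close> by simp
qed (use assms in auto)

theorem lemma3p5:
  fixes d :: "nat \<Rightarrow> nat \<Rightarrow> nat" and S :: "nat \<Rightarrow> nat set" and \<delta> :: "nat \<Rightarrow> real"
    and k :: nat
  assumes deg_pos: "\<And>n i. 1 \<le> i \<Longrightarrow> i \<le> n \<Longrightarrow> 1 \<le> d n i"
    and deg_mono: "\<And>n i j. 1 \<le> i \<Longrightarrow> i \<le> j \<Longrightarrow> j \<le> n \<Longrightarrow> d n i \<le> d n j"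
    and even_sum: "\<And>n. even (Msum (d n) n)"
    and S_sub: "\<And>n. S n \<subseteq> {1..n}"
    and dS_pos: "eventually (\<lambda>n. dset (d n) (S n) > 0) at_top"
    and delta_pos: "eventually (\<lambda>n. \<delta> n > 0) at_top"
    and delta_lim: "\<delta> \<longlonglongrightarrow> 0"
    and delta_inv: "(\<lambda>n. 1 / \<delta> n) \<in> O(\<lambda>n. ln (ln (real (Msum (d n) n))))"
    and main_cond: "eventually (\<lambda>n. real (d n n) ^ 2 * (ln (real (Msum (d n) n)) / gam (d n) n (S n)) ^ 12
                        \<le> \<delta> n * real (dset (d n) (S n))) at_top"
    and gamma_bd: "\<exists>c>0. eventually (\<lambda>n. gam (d n) n (S n) < 1 - c) at_top"
    and k2: "k \<ge> 2"
  shows "\<exists>K. eventually (\<lambda>n.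
     \<forall>v :: nat \<Rightarrow> nat.
       (\<forall>j<k. v j \<in> Ssmall (d n) n (S n) (\<delta> n)) \<and> inj_on v {..<k} \<longrightarrow>
       (\<forall>i :: nat \<Rightarrow> int.
          ((\<forall>j<k. i j \<le> int (d n (v j))) \<and>
           card {G \<in> graphs_deg n (d n). \<forall>j<k. int (degS G (S n) (v j)) = i j} > 0) \<longrightarrow>
          ucondprob (graphs_deg n (d n)) (\<lambda>G. {v 0, v 1} \<in> G)
             (\<lambda>G. \<forall>j<k. int (degS G (S n) (v j)) = i j)
          \<le> K * (Jpar (d n) n (S n) (\<delta> n) ^ 2 * real (Msum (d n) n) / real (dset (d n) (S n)) ^ 2))
       \<and> uprob (graphs_deg n (d n)) (\<lambda>G. {v 0, v 1} \<in> G)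
          \<le> K * (Jpar (d n) n (S n) (\<delta> n) ^ 2 * real (Msum (d n) n) / real (dset (d n) (S n)) ^ 2))
     at_top"
proof -
  have pos: "\<And>n i. i \<in> {1..n} \<Longrightarrow> 1 \<le> d n i" using deg_pos by simp
  have "(\<lambda>n. (4 * real k + 12) * \<delta> n) \<longlonglongrightarrow> 0"
    using tendsto_mult_right_zero[OF delta_lim] .
  then have "eventually (\<lambda>n. (4 * real k + 12) * \<delta> n < 1) at_top"
    by (rule order_tendstoD) simp
  then have ev: "eventually (\<lambda>n. 0 < dset (d n) (S n)
      \<and> real (2 * (k + 2 + d n n) * d n n) \<le> real (dset (d n) (S n)) / 2) at_top"
    using eventually_ge_at_top[of 3] dS_pos main_cond
    by eventually_elim (intro conjI switching_error_small_if_main_cond[OF _ pos S_sub], auto)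
  show ?thesis
    by (intro exI[of _ "4 :: real"] eventually_mono[OF ev] allI impI conjI; elim conjE;
        (unfold ucondprob_eq_uprob)?; intro uprob_edge_Ssmall_le[OF _ S_sub _ _ k2])
      (auto intro: deg_mono)
qed

end
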